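(* Let $d\geq 10$. There exists no smooth function $g:[0,\infty)\to\mathbb{R}$ solving $$g''(y)+\left(\frac{d-3}{y}-\frac{y}{2}\right)g'(y)-\frac{d-2}{y^2}\,g(y)\,(g(y)-1)\,(g(y)-2)=0\quad\text{for all } y>0$$ and satisfying both of the following conditions: (i) $g(0)=g'(0)=0$ and $g''(0)=a$ for some $a>0$; (ii) $\lim_{y\to\infty}g(y)=b$ for some $b\in\mathbb{R}$, and $\lim_{y\to\infty}y^3g'(y)=-2(d-2)\,b(b-1)(b-2)$.
   Context: The equation is the ordinary differential equation for self-similar shrinking solutions $w(t,r)=g(r/\sqrt{-t})$, $t<0$, of the spherically symmetric Yang–Mills heat flow $w_t=w_{rr}+\frac{d-3}{r}w_r-\frac{d-2}{r^2}w(w-1)(w-2)$ in $d$ dimensions. Here "smooth" means $g\in C^\infty([0,\infty))$. *)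

theory Defs
  imports "HOL-Analysis.Analysis"
begin

definition smooth_derivs_on_nonneg :: "(real \<Rightarrow> real) \<Rightarrow> (nat \<Rightarrow> real \<Rightarrow> real) \<Rightarrow> bool" where
  "smooth_derivs_on_nonneg g Dg \<longleftrightarrow>
     Dg 0 = g \<and>
     (\<forall>n. \<forall>x\<ge>0. (Dg n has_real_derivative Dg (Suc n) x) (at x within {0..}))"

end

theory Submission
  imports Defs
begin

text \<open>
  Write \<open>d = m + 10\<close>, so that the profile equation reads
  \<open>g'' + ((m+7)/y - y/2) g' = (m+8)/y\<^sup>2 \<cdot> g (g-1) (g-2)\<close>.  Two weighted quantities are monotone:

    \<open>V = y^(m+7) exp(-y\<^sup>2/4) g'\<close>  increases while \<open>0 < g < 1\<close>, and
    \<open>W = exp(-y\<^sup>2/4) (y^(m+5) (y\<^sup>2 - (2m+8)) g' - 2(2m+8)(g-1) y^(m+4))\<close>  has derivative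
    \<open>exp(-y\<^sup>2/4) y^(m+3) (y\<^sup>2 - (2m+8)) (g-1) (m + (m+8)(g-1)\<^sup>2)\<close>,

  whose last factor is positive exactly because \<open>m \<ge> 0\<close>, i.e. \<open>d \<ge> 10\<close>.  Initially \<open>0 < g < 1\<close>.
  If \<open>g\<close> stays in \<open>(0,1)\<close> forever, \<open>V\<close> is bounded below by a positive constant.  Otherwise \<open>g\<close>
  first reaches \<open>1\<close> at some \<open>t\<close> with \<open>g' t > 0\<close>; the monotonicity of \<open>W\<close> forces
  \<open>t\<^sup>2 > 2m+8\<close>, then \<open>g > 1\<close> for all later times, and finally \<open>W \<ge> W t > 0\<close>, which bounds
  \<open>V\<close> from below.  In both cases \<open>y\<^sup>3 g'\<close> grows like \<open>exp(y\<^sup>2/4)\<close> over a power of \<open>y\<close>, so it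
  has no finite limit; the prescribed values of the limits at infinity are never needed.
\<close>

lemma first_crossing:
  fixes f :: "real \<Rightarrow> real"
  assumes cont: "continuous_on {a..b} f" and start: "f a < c" and stop: "c \<le> f b" and "a \<le> b"
  shows "\<exists>t. a < t \<and> t \<le> b \<and> f t = c \<and> (\<forall>x. a \<le> x \<longrightarrow> x < t \<longrightarrow> f x < c)"
proof -
  define S where "S = {a..b} \<inter> f -` {c..}"
  have "closed S"
    unfolding S_def by (intro continuous_closed_preimage cont) auto
  then have "compact S"
    by (simp add: compact_eq_bounded_closed S_def bounded_Int)
  moreover have "b \<in> S" using stop \<open>a \<le> b\<close> by (simp add: S_def)
  ultimately obtain t where "t \<in> S" and least: "\<And>x. x \<in> S \<Longrightarrow> t \<le> x"
    using compact_attains_inf[OF \<open>compact S\<close>] \<open>b \<in> S\<close> by (metis empty_iff)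
  then have t: "a \<le> t" "t \<le> b" "c \<le> f t" by (simp_all add: S_def)
  with start have "a < t" by (cases "t = a") auto
  have below: "f x < c" if "a \<le> x" "x < t" for x
  proof -
    have "x \<notin> S" using least[of x] \<open>x < t\<close> by linarith
    then show ?thesis using that t(2) by (simp add: S_def)
  qed
  have "continuous_on {a..t} f" using cont by (rule continuous_on_subset) (use t(2) in auto)
  then obtain x where x: "a \<le> x" "x \<le> t" "f x = c"
    using IVT'[of f a c t] start t by auto
  have "f t = c"
  proof (cases "x = t")
    case False
    with x below[of x] show ?thesis by simp
  qed (use x in simp)
  with t \<open>a < t\<close> below show ?thesis by blast
qed

lemma exp_quadratic_dominates_power:
  "filterlim (\<lambda>y::real. exp (y\<^sup>2 / 4) / y ^ k) at_top at_top"
proof (rule filterlim_at_top_mono)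
  have "filterlim (\<lambda>y::real. inverse (y ^ k / exp y)) at_top at_top"
    by (rule filterlim_inverse_at_top[OF tendsto_power_div_exp_0])
       (auto simp: eventually_at_top_linorder intro!: exI[of _ 1])
  then show "filterlim (\<lambda>y::real. exp y / y ^ k) at_top at_top"
    by simp
  show "\<forall>\<^sub>F y in at_top. exp y / y ^ k \<le> exp (y\<^sup>2 / 4) / (y::real) ^ k"
    using eventually_ge_at_top[of "4::real"]
  proof eventually_elim
    case (elim y)
    then have "y \<le> y\<^sup>2 / 4" by (simp add: power2_eq_square field_simps)
    with elim show ?case by (intro divide_right_mono) auto
  qed
qed

lemma gaussian_weighted_lower_bound_excludes_limit:
  fixes h :: "real \<Rightarrow> real"
  assumes lim: "((\<lambda>y. y ^ 3 * h y) \<longlongrightarrow> L) at_top" and "c > 0"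
    and bound: "\<And>y. y \<ge> Y \<Longrightarrow> c \<le> y ^ (k + 3) * exp (- (y\<^sup>2 / 4)) * h y"
  shows False
proof -
  have "filterlim (\<lambda>y. c * (exp (y\<^sup>2 / 4) / y ^ k)) at_top at_top"
    by (rule filterlim_tendsto_pos_mult_at_top[OF tendsto_const \<open>c > 0\<close> exp_quadratic_dominates_power])
  then have "\<forall>\<^sub>F y in at_top. L + 1 < c * (exp (y\<^sup>2 / 4) / y ^ k)"
    by (simp add: filterlim_at_top_dense)
  moreover have "\<forall>\<^sub>F y in at_top. y ^ 3 * h y < L + 1"
    using order_tendstoD(2)[OF lim] by simp
  moreover have "\<forall>\<^sub>F y in at_top. max Y 1 \<le> y" by (rule eventually_ge_at_top)
  ultimately have "\<forall>\<^sub>F y in at_top. L + 1 < c * (exp (y\<^sup>2 / 4) / y ^ k)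
      \<and> y ^ 3 * h y < L + 1 \<and> max Y 1 \<le> y"
    by eventually_elim blast
  then obtain y where y: "L + 1 < c * (exp (y\<^sup>2 / 4) / y ^ k)" "y ^ 3 * h y < L + 1" "max Y 1 \<le> y"
    unfolding eventually_at_top_linorder by blast
  then have "y > 0" "y \<ge> Y" by auto
  have "c * (exp (y\<^sup>2 / 4) / y ^ k)
        \<le> (y ^ (k + 3) * exp (- (y\<^sup>2 / 4)) * h y) * (exp (y\<^sup>2 / 4) / y ^ k)"
    using bound[OF \<open>y \<ge> Y\<close>] \<open>y > 0\<close> by (intro mult_right_mono) auto
  also have "\<dots> = y ^ 3 * h y * (exp (- (y\<^sup>2 / 4)) * exp (y\<^sup>2 / 4)) * (y ^ k / y ^ k)"
    by (simp add: power_add mult_ac)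
  also have "\<dots> = y ^ 3 * h y"
    using \<open>y > 0\<close> by (simp add: exp_minus)
  finally show False using y by linarith
qed

locale shrinker_profile =
  fixes m :: nat and g g' g'' :: "real \<Rightarrow> real"
  assumes deriv_g: "\<And>x. x \<ge> 0 \<Longrightarrow> (g has_real_derivative g' x) (at x within {0..})"
    and deriv_g': "\<And>x. x \<ge> 0 \<Longrightarrow> (g' has_real_derivative g'' x) (at x within {0..})"
    and ode: "\<And>y. y > 0 \<Longrightarrow> g'' y + ((real m + 7) / y - y / 2) * g' y
                 - (real m + 8) / y\<^sup>2 * g y * (g y - 1) * (g y - 2) = 0"
    and g_0: "g 0 = 0" and g'_0: "g' 0 = 0" and g''_0: "g'' 0 > 0"
begin

lemma g_deriv_at: "y > 0 \<Longrightarrow> (g has_real_derivative g' y) (at y)"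
  using deriv_g[of y] at_within_interior[of y "{0..}"] by simp

lemma g'_deriv_at: "y > 0 \<Longrightarrow> (g' has_real_derivative g'' y) (at y)"
  using deriv_g'[of y] at_within_interior[of y "{0..}"] by simp

lemma continuous_g: "continuous_on {0..} g"
  by (rule DERIV_continuous_on) (use deriv_g in auto)

lemma continuous_g': "continuous_on {0..} g'"
  by (rule DERIV_continuous_on) (use deriv_g' in auto)

lemma g''_eq: "y > 0 \<Longrightarrow> g'' y = (real m + 8) / y\<^sup>2 * g y * (g y - 1) * (g y - 2)
                              - ((real m + 7) / y - y / 2) * g' y"
  using ode[of y] by (simp add: algebra_simps)

definition V :: "real \<Rightarrow> real" where
  "V y = y ^ (m + 7) * exp (- (y\<^sup>2 / 4)) * g' y"

definition W :: "real \<Rightarrow> real" where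
  "W y = exp (- (y\<^sup>2 / 4)) * (g' y * y ^ (m + 5) * (y\<^sup>2 - (2 * real m + 8))
                               - 2 * (2 * real m + 8) * (g y - 1) * y ^ (m + 4))"

lemma V_deriv:
  assumes "y > 0"
  shows "(V has_real_derivative
          (real m + 8) * y ^ (m + 5) * exp (- (y\<^sup>2 / 4)) * (g y * (g y - 1) * (g y - 2))) (at y)"
proof -
  have p: "y ^ (m + 7) = y ^ (m + 5) * y\<^sup>2" "y ^ (6 + m) = y ^ (m + 5) * y"
    by (simp_all add: power_add eval_nat_numeral mult_ac)
  show ?thesis
    unfolding V_def[abs_def]
    apply (rule derivative_eq_intros refl g'_deriv_at[OF assms] | simp)+
    apply (simp only: p g''_eq[OF assms])
    using assms by (simp add: field_simps power2_eq_square)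
qed

text \<open>\<open>W'\<close> has the sign of \<open>(y\<^sup>2 - (2m+8)) (g-1)\<close>, since \<open>m + (m+8)(g-1)\<^sup>2 > 0\<close> when \<open>g \<noteq> 1\<close>.\<close>

lemma W_deriv:
  assumes "y > 0"
  shows "(W has_real_derivative exp (- (y\<^sup>2 / 4)) * y ^ (m + 3) * (y\<^sup>2 - (2 * real m + 8))
            * (g y - 1) * (real m + (real m + 8) * (g y - 1)\<^sup>2)) (at y)"
proof -
  have p: "y ^ (m + 5) = y ^ (m + 3) * y\<^sup>2" "y ^ (4 + m) = y ^ (m + 3) * y"
     "y ^ (m + 4) = y ^ (m + 3) * y" "y ^ (3 + m) = y ^ (m + 3)"
    by (simp_all add: power_add eval_nat_numeral mult_ac)
  \<comment> \<open>naming the common power \<open>y^(m+3)\<close> keeps the final rational identity small\<close>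
  define P where "P = y ^ (m + 3)"
  show ?thesis
    unfolding W_def[abs_def]
    apply (rule derivative_eq_intros refl g'_deriv_at[OF assms] g_deriv_at[OF assms] | simp)+
    apply (simp only: p g''_eq[OF assms] flip: P_def)
    using assms by (simp add: divide_simps power2_eq_square) (simp add: algebra_simps)
qed

lemma V_0: "V 0 = 0" and W_0: "W 0 = 0"
  by (simp_all add: V_def W_def power_add)

lemma continuous_V: "continuous_on {0..} V"
  unfolding V_def by (intro continuous_intros continuous_g') simp

lemma continuous_W: "continuous_on {0..} W"
  unfolding W_def by (intro continuous_intros continuous_g continuous_g') simp

lemma V_strict_mono:
  assumes "0 \<le> a" "a < b" and unit: "\<And>x. a < x \<Longrightarrow> x < b \<Longrightarrow> 0 < g x \<and> g x < 1"
  shows "V a < V b"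
proof (rule DERIV_pos_imp_increasing_open[OF \<open>a < b\<close>])
  fix x assume x: "a < x" "x < b"
  have "g x * (g x - 1) < 0" using unit[OF x] by (simp add: mult_pos_neg)
  then have "g x * (g x - 1) * (g x - 2) > 0" using unit[OF x] by (simp add: mult_neg_neg)
  then have "(real m + 8) * x ^ (m + 5) * exp (- (x\<^sup>2 / 4)) * (g x * (g x - 1) * (g x - 2)) > 0"
    using x \<open>0 \<le> a\<close> by simp
  with V_deriv[of x] x \<open>0 \<le> a\<close> show "\<exists>z. (V has_real_derivative z) (at x) \<and> z > 0"
    by auto
qed (use continuous_on_subset[OF continuous_V] \<open>0 \<le> a\<close> in auto)

lemma W_strict_mono:
  assumes "0 \<le> a" "a < b"
    and sign: "\<And>x. a < x \<Longrightarrow> x < b \<Longrightarrow> (x\<^sup>2 - (2 * real m + 8)) * (g x - 1) > 0"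
  shows "W a < W b"
proof (rule DERIV_pos_imp_increasing_open[OF \<open>a < b\<close>])
  fix x assume x: "a < x" "x < b"
  have "g x \<noteq> 1" using sign[OF x] by auto
  then have level: "real m + (real m + 8) * (g x - 1)\<^sup>2 > 0"
    by (intro add_nonneg_pos) auto
  have "exp (- (x\<^sup>2 / 4)) * x ^ (m + 3) > 0" using x \<open>0 \<le> a\<close> by simp
  then have "exp (- (x\<^sup>2 / 4)) * x ^ (m + 3) * ((x\<^sup>2 - (2 * real m + 8))
      * (g x - 1)) * (real m + (real m + 8) * (g x - 1)\<^sup>2) > 0"
    by (intro mult_pos_pos[OF mult_pos_pos] sign[OF x] level)
  then have "exp (- (x\<^sup>2 / 4)) * x ^ (m + 3) * (x\<^sup>2 - (2 * real m + 8))
      * (g x - 1) * (real m + (real m + 8) * (g x - 1)\<^sup>2) > 0"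
    by (simp add: mult.assoc)
  with W_deriv[of x] x \<open>0 \<le> a\<close> show "\<exists>z. (W has_real_derivative z) (at x) \<and> z > 0"
    by auto
qed (use continuous_on_subset[OF continuous_W] \<open>0 \<le> a\<close> in auto)

lemma W_at_level_one:
  "g y = 1 \<Longrightarrow> W y = exp (- (y\<^sup>2 / 4)) * y ^ (m + 5) * (y\<^sup>2 - (2 * real m + 8)) * g' y"
  by (simp add: W_def)

lemma W_le_V:
  assumes "y > 0" "g y \<ge> 1" "2 * real m + 8 < y\<^sup>2" "W y > 0"
  shows "W y \<le> V y"
proof -
  define E where "E = exp (- (y\<^sup>2 / 4)) * y ^ (m + 5)"
  have "E > 0" using \<open>y > 0\<close> by (simp add: E_def)
  have "W y = E * (y\<^sup>2 - (2 * real m + 8)) * g' y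
             - exp (- (y\<^sup>2 / 4)) * (2 * (2 * real m + 8) * (g y - 1) * y ^ (m + 4))"
    by (simp add: W_def E_def algebra_simps)
  moreover have "exp (- (y\<^sup>2 / 4)) * (2 * (2 * real m + 8) * (g y - 1) * y ^ (m + 4)) \<ge> 0"
    using assms(1,2) by simp
  ultimately have "W y \<le> E * (y\<^sup>2 - (2 * real m + 8)) * g' y" by linarith
  with \<open>W y > 0\<close> \<open>E > 0\<close> assms(3) have "g' y > 0"
    by (smt (verit) mult_pos_pos mult_nonneg_nonpos zero_less_mult_iff)
  then have "E * (y\<^sup>2 - (2 * real m + 8)) * g' y \<le> E * y\<^sup>2 * g' y"
    using \<open>E > 0\<close> by (intro mult_right_mono mult_left_mono) auto
  also have "\<dots> = V y"
    by (simp add: E_def V_def power_add eval_nat_numeral mult_ac)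
  finally show ?thesis using \<open>W y \<le> _\<close> by linarith
qed


lemma g'_pos_of_V_pos: "y > 0 \<Longrightarrow> V y > 0 \<Longrightarrow> g' y > 0"
  by (simp add: V_def zero_less_mult_iff mult_less_0_iff)

text \<open>As long as \<open>g\<close> has stayed in \<open>(0,1)\<close>, \<open>V\<close> has increased from \<open>V 0 = 0\<close>, so \<open>g' > 0\<close>.\<close>

lemma g'_pos_while_in_unit_interval:
  assumes "t > 0" and unit: "\<And>x. 0 < x \<Longrightarrow> x < t \<Longrightarrow> 0 < g x \<and> g x < 1"
  shows "g' t > 0"
  using V_strict_mono[of 0 t] unit \<open>t > 0\<close> by (intro g'_pos_of_V_pos) (auto simp: V_0)

text \<open>Since \<open>g'(y)/y \<rightarrow> g''(0) > 0\<close>, the profile starts increasing into \<open>(0,1)\<close>.\<close>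

lemma starts_in_unit_interval:
  obtains e where "e > 0" "\<And>y. 0 < y \<Longrightarrow> y < e \<Longrightarrow> 0 < g y \<and> g y < 1"
proof -
  have "((\<lambda>y. (g' y - g' 0) / (y - 0)) \<longlongrightarrow> g'' 0) (at 0 within {0..})"
    using deriv_g'[of 0] by (simp add: has_field_derivative_iff)
  then have "((\<lambda>y. g' y / y) \<longlongrightarrow> g'' 0) (at 0 within {0..})"
    by (simp add: g'_0)
  then have slope: "((\<lambda>y. g' y / y) \<longlongrightarrow> g'' 0) (at_right 0)"
    by (rule tendsto_within_subset) auto
  have "(g \<longlongrightarrow> 0) (at_right 0)"
    using continuous_on_Icc_at_rightD[OF continuous_on_subset[OF continuous_g, of "{0..1}"]] g_0 by auto
  then have "\<forall>\<^sub>F y in at_right 0. g y < 1"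
    by (rule order_tendstoD) simp
  moreover have "\<forall>\<^sub>F y in at_right 0. g' y / y > 0"
    using order_tendstoD(1)[OF slope g''_0] .
  ultimately have "\<forall>\<^sub>F y in at_right 0. g' y / y > 0 \<and> g y < 1"
    by eventually_elim blast
  then obtain e where e: "e > 0" "\<And>y. 0 < y \<Longrightarrow> y < e \<Longrightarrow> g' y / y > 0 \<and> g y < 1"
    by (auto simp: eventually_at_right_field)
  have "0 < g y" if "0 < y" "y < e" for y
  proof -
    have "g 0 < g y"
    proof (rule DERIV_pos_imp_increasing_open[OF \<open>0 < y\<close>])
      fix x assume "0 < x" "x < y"
      with e(2)[of x] that g_deriv_at[of x] show "\<exists>z. (g has_real_derivative z) (at x) \<and> z > 0"
        by (auto simp: zero_less_divide_iff)
    qed (use continuous_on_subset[OF continuous_g] in auto)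
    then show ?thesis by (simp add: g_0)
  qed
  with e that show ?thesis by blast
qed


text \<open>If \<open>g\<close> leaves \<open>(0,1)\<close>, it does so by reaching \<open>1\<close>: it is increasing while inside.\<close>

lemma first_hit_of_one:
  assumes "y > 0" "\<not> (0 < g y \<and> g y < 1)"
  obtains t where "t > 0" "g t = 1" "\<And>x. 0 < x \<Longrightarrow> x < t \<Longrightarrow> 0 < g x \<and> g x < 1"
proof -
  obtain e where e: "e > 0" "\<And>x. 0 < x \<Longrightarrow> x < e \<Longrightarrow> 0 < g x \<and> g x < 1"
    using starts_in_unit_interval by blast
  define a where "a = min e y / 2"
  have a: "0 < a" "a < e" "a < y" using e(1) \<open>y > 0\<close> by (auto simp: a_def)
  have "continuous_on {a..y} (\<lambda>x. \<bar>g x - 1/2\<bar>)"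
    using a by (intro continuous_intros continuous_on_subset[OF continuous_g]) auto
  moreover have "\<bar>g a - 1/2\<bar> < 1/2" using e(2)[OF a(1,2)] by (simp add: abs_if)
  moreover have "1/2 \<le> \<bar>g y - 1/2\<bar>" using assms(2) by (auto simp: abs_if)
  ultimately obtain t where t: "a < t" "\<bar>g t - 1/2\<bar> = 1/2"
    and before: "\<And>x. a \<le> x \<Longrightarrow> x < t \<Longrightarrow> \<bar>g x - 1/2\<bar> < 1/2"
    using first_crossing[of a y _ "1/2"] less_imp_le[OF a(3)] by blast
  have unit: "0 < g x \<and> g x < 1" if "0 < x" "x < t" for x
  proof (cases "x < a")
    case True
    then show ?thesis using e(2)[of x] that a(2) by simp
  next
    case False
    then have "\<bar>g x - 1/2\<bar> < 1/2" using before[of x] that by simp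
    then show ?thesis by (simp add: abs_if split: if_splits)
  qed
  have "g a < g t"
  proof (rule DERIV_pos_imp_increasing_open[OF \<open>a < t\<close>])
    fix x assume x: "a < x" "x < t"
    have "g' x > 0"
      using a x unit by (intro g'_pos_while_in_unit_interval) auto
    with g_deriv_at[of x] x a show "\<exists>z. (g has_real_derivative z) (at x) \<and> z > 0" by auto
  qed (use a continuous_on_subset[OF continuous_g] in auto)
  moreover have "0 < g a" using e(2)[OF a(1,2)] by simp
  ultimately have "g t = 1" using t(2) by (simp add: abs_if split: if_splits)
  moreover have "t > 0" using a(1) t(1) by linarith
  ultimately show ?thesis using unit that by blast
qed

text \<open>The level \<open>1\<close> cannot be reached before \<open>y\<^sup>2 = 2m+8\<close>: there \<open>W\<close> would have increased
  from \<open>0\<close> while \<open>W(t) = exp(-t\<^sup>2/4) t^(m+5) (t\<^sup>2 - (2m+8)) g'(t) \<le> 0\<close>.\<close>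

lemma first_hit_is_late:
  assumes "t > 0" "g t = 1" and unit: "\<And>x. 0 < x \<Longrightarrow> x < t \<Longrightarrow> 0 < g x \<and> g x < 1"
  shows "2 * real m + 8 < t\<^sup>2"
proof (rule ccontr)
  assume early: "\<not> 2 * real m + 8 < t\<^sup>2"
  have "W 0 < W t"
  proof (rule W_strict_mono)
    fix x assume x: "0 < x" "x < t"
    then have "x\<^sup>2 < t\<^sup>2" by (intro power_strict_mono) auto
    with early unit[OF x] show "(x\<^sup>2 - (2 * real m + 8)) * (g x - 1) > 0"
      by (intro mult_neg_neg) auto
  qed (use \<open>t > 0\<close> in auto)
  moreover have "g' t > 0" using g'_pos_while_in_unit_interval[OF \<open>t > 0\<close> unit] by blast
  then have "W t \<le> 0"
    using early \<open>t > 0\<close> unfolding W_at_level_one[OF \<open>g t = 1\<close>]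
    by (intro mult_nonpos_nonneg mult_nonneg_nonpos) auto
  ultimately show False by (simp add: W_0)
qed

lemma W_pos_iff_at_level_one:
  assumes "y > 0" "g y = 1" "2 * real m + 8 < y\<^sup>2"
  shows "W y > 0 \<longleftrightarrow> g' y > 0"
proof -
  have "exp (- (y\<^sup>2 / 4)) * y ^ (m + 5) * (y\<^sup>2 - (2 * real m + 8)) > 0"
    using assms by simp
  then show ?thesis
    unfolding W_at_level_one[OF \<open>g y = 1\<close>] using zero_less_mult_pos mult_pos_pos by blast
qed

lemma W_strict_mono_above_one:
  assumes "0 < a" "a < b" "2 * real m + 8 \<le> a\<^sup>2" and above: "\<And>x. a < x \<Longrightarrow> x < b \<Longrightarrow> g x > 1"
  shows "W a < W b"
proof (rule W_strict_mono)
  fix x assume x: "a < x" "x < b"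
  then have "a\<^sup>2 < x\<^sup>2" using \<open>0 < a\<close> by (intro power_strict_mono) auto
  then show "(x\<^sup>2 - (2 * real m + 8)) * (g x - 1) > 0"
    using above[OF x] assms(3) by simp
qed (use assms(1,2) in auto)

text \<open>After crossing \<open>1\<close> late and upwards, \<open>g\<close> never returns to \<open>1\<close>: at a first return \<open>r\<close>,
  \<open>W(r) > W(t) > 0\<close> would force \<open>g'(r) > 0\<close>, contradicting the descent to \<open>1\<close> from above.\<close>

lemma stays_above_one:
  assumes "t > 0" "g t = 1" "2 * real m + 8 < t\<^sup>2" "g' t > 0" and "y > t"
  shows "g y > 1"
proof (rule ccontr)
  assume "\<not> g y > 1"
  obtain \<delta> where \<delta>: "\<delta> > 0" "\<And>h. 0 < h \<Longrightarrow> h < \<delta> \<Longrightarrow> g t < g (t + h)"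
    using DERIV_pos_inc_right[OF g_deriv_at[OF \<open>t > 0\<close>] \<open>g' t > 0\<close>] by blast
  define s where "s = t + min \<delta> (y - t) / 2"
  have s: "t < s" "s < y" "s - t < \<delta>" using \<delta>(1) \<open>y > t\<close> by (auto simp: s_def min_def field_simps)
  have "continuous_on {s..y} (\<lambda>x. - g x)"
    using s \<open>t > 0\<close> by (intro continuous_intros continuous_on_subset[OF continuous_g]) auto
  moreover have "- g s < - 1" using \<delta>(2)[of "s - t"] s \<open>g t = 1\<close> by simp
  moreover have "- 1 \<le> - g y" using \<open>\<not> g y > 1\<close> by simp
  ultimately obtain r where r: "s < r" "g r = 1"
    and before: "\<And>x. s \<le> x \<Longrightarrow> x < r \<Longrightarrow> g x > 1"
    using first_crossing[of s y "\<lambda>x. - g x" "- 1"] less_imp_le[OF s(2)] by force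
  have above: "g x > 1" if "t < x" "x < r" for x
  proof (cases "x < s")
    case True
    then show ?thesis using \<delta>(2)[of "x - t"] that s(3) \<open>g t = 1\<close> by simp
  qed (use before that in simp)
  have "r > 0" "2 * real m + 8 < r\<^sup>2"
    using r(1) s(1) \<open>t > 0\<close> assms(3) power_strict_mono[of t r 2] by auto
  have "W t > 0" using W_pos_iff_at_level_one assms(1-4) by blast
  also have "W t < W r"
    using W_strict_mono_above_one[of t r] above assms(1,3) r(1) s(1) by simp
  finally have "g' r > 0"
    using W_pos_iff_at_level_one[OF \<open>r > 0\<close> r(2) \<open>2 * real m + 8 < r\<^sup>2\<close>] by simp
  then obtain \<delta>' where \<delta>': "\<delta>' > 0" "\<And>h. 0 < h \<Longrightarrow> h < \<delta>' \<Longrightarrow> g (r - h) < g r"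
    using DERIV_pos_inc_left[OF g_deriv_at[OF \<open>r > 0\<close>]] by blast
  define h where "h = min \<delta>' (r - t) / 2"
  have h: "0 < h" "h < \<delta>'" "t < r - h"
    using \<delta>'(1) r(1) s(1) by (auto simp: h_def min_def field_simps)
  then have "g (r - h) < 1" using \<delta>'(2) r(2) by simp
  moreover have "g (r - h) > 1" using above h by simp
  ultimately show False by simp
qed

lemma V_bounded_below_if_trapped:
  assumes "\<And>y. y > 0 \<Longrightarrow> 0 < g y \<and> g y < 1"
  shows "V 1 > 0" and "\<And>y. y \<ge> 1 \<Longrightarrow> V 1 \<le> V y"
proof -
  show "V 1 > 0" using V_strict_mono[of 0 1] assms by (simp add: V_0)
  show "V 1 \<le> V y" if "y \<ge> 1" for y
    using V_strict_mono[of 1 y] assms that by (cases "y = 1") auto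
qed

text \<open>Second case: if \<open>g\<close> leaves \<open>(0,1)\<close>, it reaches \<open>1\<close> late at some \<open>t\<close> and stays above \<open>1\<close>
  afterwards, so \<open>V \<ge> W \<ge> W(t) > 0\<close> from then on.\<close>

lemma V_bounded_below_if_escapes:
  assumes "y > 0" "\<not> (0 < g y \<and> g y < 1)"
  obtains t where "W t > 0" and "\<And>x. x \<ge> t + 1 \<Longrightarrow> W t \<le> V x"
proof -
  obtain t where t: "t > 0" "g t = 1"
    and unit: "\<And>x. 0 < x \<Longrightarrow> x < t \<Longrightarrow> 0 < g x \<and> g x < 1"
    using first_hit_of_one[OF assms] by blast
  have late: "2 * real m + 8 < t\<^sup>2" using first_hit_is_late t unit by blast
  have "g' t > 0" using g'_pos_while_in_unit_interval t(1) unit by blast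
  then have "W t > 0" using W_pos_iff_at_level_one t late by blast
  have above: "g x > 1" if "x > t" for x
    using stays_above_one[OF t late \<open>g' t > 0\<close> that] .
  have "W t \<le> V x" if "x \<ge> t + 1" for x
  proof -
    have "t\<^sup>2 < x\<^sup>2" using that t(1) by (intro power_strict_mono) auto
    with late have late_x: "2 * real m + 8 < x\<^sup>2" by simp
    have "W t < W x"
      using W_strict_mono_above_one[of t x] above t(1) late that by simp
    moreover have "W x \<le> V x"
      using W_le_V[of x] \<open>W t > 0\<close> \<open>W t < W x\<close> above[of x] that t(1) late_x by simp
    ultimately show ?thesis by simp
  qed
  with \<open>W t > 0\<close> that show ?thesis by blast
qed

lemma no_finite_limit:
  assumes lim: "((\<lambda>y. y ^ 3 * g' y) \<longlongrightarrow> L) at_top"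
  shows False
proof -
  obtain c Y where "c > 0" and bound: "\<And>y. y \<ge> Y \<Longrightarrow> c \<le> V y"
  proof (cases "\<forall>y>0. 0 < g y \<and> g y < 1")
    case True
    with V_bounded_below_if_trapped that show ?thesis by blast
  next
    case False
    with V_bounded_below_if_escapes that show ?thesis by blast
  qed
  have "m + 4 + 3 = m + 7" by simp
  with bound have "c \<le> y ^ (m + 4 + 3) * exp (- (y\<^sup>2 / 4)) * g' y" if "y \<ge> Y" for y
    using that by (simp only: V_def)
  with \<open>c > 0\<close> show False
    using gaussian_weighted_lower_bound_excludes_limit[OF lim] by blast
qed

end

theorem theorem2:
  fixes d :: nat
  assumes "d \<ge> 10"
  shows "\<not> (\<exists>(g :: real \<Rightarrow> real) Dg.
     smooth_derivs_on_nonneg g Dg \<and>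
     (\<forall>y>0. Dg 2 y + ((real d - 3) / y - y / 2) * Dg 1 y
              - (real d - 2) / y\<^sup>2 * g y * (g y - 1) * (g y - 2) = 0) \<and>
     g 0 = 0 \<and> Dg 1 0 = 0 \<and> (\<exists>a>0. Dg 2 0 = a) \<and>
     (\<exists>b::real. (g \<longlongrightarrow> b) at_top \<and>
        ((\<lambda>y. y ^ 3 * Dg 1 y) \<longlongrightarrow> - 2 * (real d - 2) * b * (b - 1) * (b - 2)) at_top))"
proof
  assume "\<exists>(g :: real \<Rightarrow> real) Dg.
     smooth_derivs_on_nonneg g Dg \<and>
     (\<forall>y>0. Dg 2 y + ((real d - 3) / y - y / 2) * Dg 1 y
              - (real d - 2) / y\<^sup>2 * g y * (g y - 1) * (g y - 2) = 0) \<and>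
     g 0 = 0 \<and> Dg 1 0 = 0 \<and> (\<exists>a>0. Dg 2 0 = a) \<and>
     (\<exists>b::real. (g \<longlongrightarrow> b) at_top \<and>
        ((\<lambda>y. y ^ 3 * Dg 1 y) \<longlongrightarrow> - 2 * (real d - 2) * b * (b - 1) * (b - 2)) at_top)"
  then obtain g :: "real \<Rightarrow> real" and Dg L where smooth: "smooth_derivs_on_nonneg g Dg"
    and ode: "\<forall>y>0. Dg 2 y + ((real d - 3) / y - y / 2) * Dg 1 y
                 - (real d - 2) / y\<^sup>2 * g y * (g y - 1) * (g y - 2) = 0"
    and init: "g 0 = 0" "Dg 1 0 = 0" "Dg 2 0 > 0"
    and lim: "((\<lambda>y. y ^ 3 * Dg 1 y) \<longlongrightarrow> L) at_top"
    by blast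
  obtain m where d: "d = m + 10" using assms le_iff_add by (metis add.commute)
  interpret shrinker_profile m g "Dg 1" "Dg 2"
  proof
    fix x :: real assume "x \<ge> 0"
    with smooth show "(g has_real_derivative Dg 1 x) (at x within {0..})"
      and "(Dg 1 has_real_derivative Dg 2 x) (at x within {0..})"
      unfolding smooth_derivs_on_nonneg_def by (metis One_nat_def Suc_1)+
  next
    fix y :: real assume "y > 0"
    have "real d - 3 = real m + 7" "real d - 2 = real m + 8" using d by simp_all
    with ode[rule_format, OF \<open>y > 0\<close>]
    show "Dg 2 y + ((real m + 7) / y - y / 2) * Dg 1 y
            - (real m + 8) / y\<^sup>2 * g y * (g y - 1) * (g y - 2) = 0" by (simp only:)
  qed (use init in auto)
  show False using no_finite_limit[OF lim] .
qed

end
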